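(* Let $G$ be a $\sigma$-compact locally compact Abelian group and $\omega=\sum_{x\in\Gamma}\omega(x)\delta_x$ a concentrated weighted comb with $\|\omega\|_\infty<\infty$. Then $\omega$ is norm-almost periodic if and only if $\omega$ is sup-almost periodic.
   Context: $\|\omega\|_\infty:=\sup_x|\omega(\{x\})|$. Fix a compact $K\subset G$ with nonempty interior and set $\|\mu\|_K:=\sup_{t\in G}|\mu|(t+K)$; $T_t\mu(A)=\mu(A-t)$. A weighted comb $\omega$ is concentrated if for every $\varepsilon>0$ there is a set $\Lambda\subset G$ with finite local complexity ($\Lambda-\Lambda$ locally finite) such that $\|\omega-\omega|_\Lambda\|_K<\varepsilon$, where $\omega|_\Lambda=\sum_{x\in\Gamma\cap\Lambda}\omega(x)\delta_x$. Norm-almost periodic: $\{t:\|\omega-T_t\omega\|_K<\varepsilon\}$ relatively dense for all $\varepsilon>0$; sup-almost periodic: $\{t:\sup_x|\omega(\{t+x\})-\omega(\{x\})|<\varepsilon\}$ relatively dense for all $\varepsilon>0$. *)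

theory Defs
  imports "HOL-Analysis.Analysis"
begin

text \<open>A weighted comb \<open>\<omega> = \<Sum>x\<in>\<Gamma>. \<omega>(x) \<delta>\<^sub>x\<close> is represented by its weight
  function \<open>w\<close> (with \<open>w x = \<omega>({x})\<close>, zero off \<open>\<Gamma>\<close>).\<close>

definition var_mass :: "('a \<Rightarrow> complex) \<Rightarrow> 'a set \<Rightarrow> ennreal" where
  "var_mass w A = (\<Sum>\<^sub>\<infinity>x\<in>A. ennreal (cmod (w x)))"

text \<open>The comb defines a (Radon) measure: finite total variation on compacts.\<close>
definition weighted_comb :: "('a::topological_space \<Rightarrow> complex) \<Rightarrow> bool" where
  "weighted_comb w \<longleftrightarrow> (\<forall>C. compact C \<longrightarrow> var_mass w C < \<infinity>)"

definition K_norm :: "'a::ab_group_add set \<Rightarrow> ('a \<Rightarrow> complex) \<Rightarrow> ennreal" where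
  "K_norm K w = (SUP t. var_mass w ((+) t ` K))"

definition sup_norm :: "('a \<Rightarrow> complex) \<Rightarrow> ennreal" where
  "sup_norm w = (SUP x. ennreal (cmod (w x)))"

text \<open>Translate: \<open>T\<^sub>t\<omega>(A) = \<omega>(A - t)\<close>, so \<open>(T\<^sub>t\<omega>)({x}) = \<omega>({x - t})\<close>.\<close>
definition transl :: "'a::ab_group_add \<Rightarrow> ('a \<Rightarrow> complex) \<Rightarrow> ('a \<Rightarrow> complex)" where
  "transl t w = (\<lambda>x. w (x - t))"

definition comb_restrict :: "('a \<Rightarrow> complex) \<Rightarrow> 'a set \<Rightarrow> ('a \<Rightarrow> complex)" where
  "comb_restrict w \<Lambda> = (\<lambda>x. if x \<in> \<Lambda> then w x else 0)"

definition locally_finite_set :: "'a::topological_space set \<Rightarrow> bool" where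
  "locally_finite_set S \<longleftrightarrow> (\<forall>C. compact C \<longrightarrow> finite (S \<inter> C))"

definition FLC :: "'a::{topological_space, ab_group_add} set \<Rightarrow> bool" where
  "FLC \<Lambda> \<longleftrightarrow> locally_finite_set {x - y | x y. x \<in> \<Lambda> \<and> y \<in> \<Lambda>}"

definition rel_dense :: "'a::{topological_space, ab_group_add} set \<Rightarrow> bool" where
  "rel_dense S \<longleftrightarrow> (\<exists>C. compact C \<and> (\<forall>g. \<exists>s\<in>S. \<exists>c\<in>C. g = s + c))"

definition concentrated ::
  "'a::{topological_space, ab_group_add} set \<Rightarrow> ('a \<Rightarrow> complex) \<Rightarrow> bool" where
  "concentrated K w \<longleftrightarrow> (\<forall>\<epsilon>>0. \<exists>\<Lambda>. FLC \<Lambda> \<and>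
      K_norm K (\<lambda>x. w x - comb_restrict w \<Lambda> x) < ennreal \<epsilon>)"

definition norm_ap ::
  "'a::{topological_space, ab_group_add} set \<Rightarrow> ('a \<Rightarrow> complex) \<Rightarrow> bool" where
  "norm_ap K w \<longleftrightarrow> (\<forall>\<epsilon>>0. rel_dense
      {t. K_norm K (\<lambda>x. w x - transl t w x) < ennreal \<epsilon>})"

definition sup_ap :: "('a::{topological_space, ab_group_add} \<Rightarrow> complex) \<Rightarrow> bool" where
  "sup_ap w \<longleftrightarrow> (\<forall>\<epsilon>>0. rel_dense
      {t. (SUP x. ennreal (cmod (w (t + x) - w x))) < ennreal \<epsilon>})"

definition sigma_compact_space :: "'a::topological_space itself \<Rightarrow> bool" where
  "sigma_compact_space _ \<longleftrightarrow> (\<exists>F::nat \<Rightarrow> 'a set. (\<forall>n. compact (F n)) \<and> (\<Union>n. F n) = UNIV)"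

end

theory Submission
  imports Defs
begin

text \<open>Since \<open>K\<close> has nonempty interior, each point mass is seen by some translate \<open>t + K\<close>,
  so \<open>\<parallel>\<cdot>\<parallel>\<^sub>\<infinity> \<le> \<parallel>\<cdot>\<parallel>\<^sub>K\<close> and norm-almost periods are sup-almost periods. Conversely,
  approximate \<open>\<omega>\<close> up to \<open>\<epsilon>/3\<close> in \<open>\<parallel>\<cdot>\<parallel>\<^sub>K\<close> by its restriction to an FLC set \<open>\<Lambda>\<close>.
  Finite local complexity bounds the number of points of \<open>\<Lambda>\<close> in any translate of \<open>K\<close>
  by a constant \<open>N\<close>, because their differences lie in the finite set
  \<open>(\<Lambda> - \<Lambda>) \<inter> (K - K)\<close>. For a sup-almost period \<open>t\<close> with tolerance \<open>\<delta>\<close>, the mass of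
  \<open>\<omega> - T\<^sub>t\<omega>\<close> on \<open>s + K\<close> is then at most \<open>2N\<delta>\<close> on \<open>\<Lambda> \<union> (t + \<Lambda>)\<close> plus twice the
  \<open>\<parallel>\<cdot>\<parallel>\<^sub>K\<close>-norm of \<open>\<omega> - \<omega>|\<^sub>\<Lambda>\<close> elsewhere.\<close>

lemma ennreal_summable_on: "(f :: 'b \<Rightarrow> ennreal) summable_on A"
  by (rule nonneg_summable_on_complete) simp

lemma var_mass_point_le:
  assumes "x \<in> A"
  shows "ennreal (cmod (w x)) \<le> var_mass w A"
proof -
  have "infsum (\<lambda>x. ennreal (cmod (w x))) {x} \<le> infsum (\<lambda>x. ennreal (cmod (w x))) A"
    by (rule infsum_mono_neutral[OF ennreal_summable_on ennreal_summable_on]) (use assms in auto)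
  then show ?thesis by (simp add: var_mass_def)
qed

lemma var_mass_le_K_norm: "var_mass w ((+) s ` K) \<le> K_norm K w"
  unfolding K_norm_def by (rule SUP_upper) simp

lemma var_mass_transl: "var_mass (transl t w) A = var_mass w ((\<lambda>x. x - t) ` A)"
proof -
  have "inj_on (\<lambda>x. x - t) A" by (auto simp: inj_on_def)
  then show ?thesis by (simp add: var_mass_def transl_def infsum_reindex comp_def)
qed

lemma K_norm_transl: "K_norm K (transl t w) = K_norm K w"
proof -
  have "(\<lambda>x. x - t) ` (+) s ` K = (+) (s - t) ` K" for s
    by (auto simp: image_iff algebra_simps)
  then have "K_norm K (transl t w) = (SUP s. var_mass w ((+) (s - t) ` K))"
    by (simp add: K_norm_def var_mass_transl)
  also have "\<dots> = (SUP s. var_mass w ((+) s ` K))"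
    by (rule arg_cong[where f = Sup]) (force simp: image_iff intro: exI[of _ "_ + t"])
  finally show ?thesis by (simp add: K_norm_def)
qed

lemma sup_norm_le_K_norm:
  assumes "K \<noteq> {}"
  shows "sup_norm w \<le> K_norm K w"
  unfolding sup_norm_def
proof (rule SUP_least)
  fix x
  obtain k where "k \<in> K" using assms by blast
  then have "x \<in> (+) (x - k) ` K" by (auto intro!: image_eqI[of _ _ k])
  then show "ennreal (cmod (w x)) \<le> K_norm K w"
    by (rule order_trans[OF var_mass_point_le var_mass_le_K_norm])
qed

lemma sup_norm_diff_transl:
  "sup_norm (\<lambda>x. w x - transl t w x) = (SUP x. ennreal (cmod (w (t + x) - w x)))"
proof -
  have "(\<lambda>x. ennreal (cmod (w (t + x) - w x))) = (\<lambda>x. ennreal (cmod (w x - w (x - t)))) \<circ> (+) t"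
    by (simp add: comp_def)
  then have "range (\<lambda>x. ennreal (cmod (w (t + x) - w x))) = range (\<lambda>x. ennreal (cmod (w x - w (x - t))))"
    by (simp only: image_comp[symmetric] surj_plus)
  then show ?thesis
    by (simp add: sup_norm_def transl_def)
qed

lemma rel_dense_mono: "S \<subseteq> T \<Longrightarrow> rel_dense S \<Longrightarrow> rel_dense T"
  unfolding rel_dense_def by (metis subsetD)

lemma FLC_translates_card_bounded:
  fixes K :: "'a::topological_ab_group_add set"
  assumes "FLC \<Lambda>" and "compact K"
  obtains N where "\<And>s. finite (\<Lambda> \<inter> (+) s ` K) \<and> card (\<Lambda> \<inter> (+) s ` K) \<le> N"
proof
  let ?D = "{x - y | x y. x \<in> \<Lambda> \<and> y \<in> \<Lambda>} \<inter> (\<lambda>p. fst p - snd p) ` (K \<times> K)"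
  have "compact ((\<lambda>p. fst p - snd p) ` (K \<times> K))"
    by (intro compact_continuous_image continuous_intros compact_Times assms(2))
  then have fin: "finite ?D"
    using assms(1) unfolding FLC_def locally_finite_set_def by blast
  fix s
  show "finite (\<Lambda> \<inter> (+) s ` K) \<and> card (\<Lambda> \<inter> (+) s ` K) \<le> card ?D"
  proof (cases "\<Lambda> \<inter> (+) s ` K = {}")
    case False
    then obtain y where y: "y \<in> \<Lambda>" "y \<in> (+) s ` K" by blast
    have inj: "inj_on (\<lambda>x. x - y) (\<Lambda> \<inter> (+) s ` K)" by (auto simp: inj_on_def)
    have "(\<lambda>x. x - y) ` (\<Lambda> \<inter> (+) s ` K) \<subseteq> ?D"
    proof
      fix z
      assume "z \<in> (\<lambda>x. x - y) ` (\<Lambda> \<inter> (+) s ` K)"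
      then obtain x k k' where "x \<in> \<Lambda>" "x = s + k" "k \<in> K" "y = s + k'" "k' \<in> K" "z = x - y"
        using y(2) by blast
      then have "z \<in> {x - y | x y. x \<in> \<Lambda> \<and> y \<in> \<Lambda>}" and "z = fst (k, k') - snd (k, k')"
        using y(1) by (blast, simp)
      then show "z \<in> ?D"
        using \<open>k \<in> K\<close> \<open>k' \<in> K\<close> by blast
    qed
    with inj fin show ?thesis
      by (meson card_inj_on_le finite_imageD finite_subset)
  qed simp
qed

lemma card_translate_inter_union_le:
  fixes \<Lambda> :: "'a::ab_group_add set"
  assumes "\<And>s. finite (\<Lambda> \<inter> (+) s ` K) \<and> card (\<Lambda> \<inter> (+) s ` K) \<le> N"
  shows "finite ((+) s ` K \<inter> (\<Lambda> \<union> (+) t ` \<Lambda>))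
    \<and> card ((+) s ` K \<inter> (\<Lambda> \<union> (+) t ` \<Lambda>)) \<le> 2 * N"
proof -
  have "(+) t ` (+) (s - t) ` K = (+) s ` K"
    by (simp add: image_image)
  then have shifted: "(+) s ` K \<inter> (+) t ` \<Lambda> = (+) t ` (\<Lambda> \<inter> (+) (s - t) ` K)"
    by (subst image_Int) (auto simp: inj_def)
  have split: "(+) s ` K \<inter> (\<Lambda> \<union> (+) t ` \<Lambda>) = (\<Lambda> \<inter> (+) s ` K) \<union> (+) t ` (\<Lambda> \<inter> (+) (s - t) ` K)"
    using shifted by blast
  let ?L = "\<Lambda> \<inter> (+) s ` K" and ?R = "(+) t ` (\<Lambda> \<inter> (+) (s - t) ` K)"
  have "finite ?L" "card ?L \<le> N"
    using assms[of s] by auto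
  moreover have "finite ?R" "card ?R \<le> N"
    using assms[of "s - t"] card_image_le[of "\<Lambda> \<inter> (+) (s - t) ` K" "(+) t"] by auto
  moreover have "card (?L \<union> ?R) \<le> card ?L + card ?R"
    by (rule card_Un_le)
  ultimately show ?thesis
    unfolding split by simp
qed

text \<open>Off \<open>\<Lambda> \<union> (t + \<Lambda>)\<close> both \<open>\<omega>\<close> and \<open>T\<^sub>t\<omega>\<close> coincide with their parts outside \<open>\<Lambda>\<close>.\<close>
lemma cmod_diff_transl_le:
  fixes w :: "'a::ab_group_add \<Rightarrow> complex" and \<Lambda> :: "'a set"
  assumes "cmod (w x - w (x - t)) \<le> \<delta>"
  defines "r \<equiv> \<lambda>x. w x - comb_restrict w \<Lambda> x"
  shows "ennreal (cmod (w x - transl t w x)) \<le>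
    (if x \<in> \<Lambda> \<union> (+) t ` \<Lambda> then ennreal \<delta> else 0) + ennreal (cmod (r x)) + ennreal (cmod (transl t r x))"
proof (cases "x \<in> \<Lambda> \<union> (+) t ` \<Lambda>")
  case True
  then show ?thesis
    using assms(1) by (simp add: transl_def add_increasing2 ennreal_leI)
next
  case False
  then have "x \<notin> \<Lambda>" "x - t \<notin> \<Lambda>" by (auto simp: image_iff)
  then have "cmod (w x - transl t w x) \<le> cmod (r x) + cmod (transl t r x)"
    by (simp add: r_def comb_restrict_def transl_def norm_triangle_ineq4)
  then have "ennreal (cmod (w x - transl t w x)) \<le> ennreal (cmod (r x) + cmod (transl t r x))"
    by (rule ennreal_leI)
  then show ?thesis
    using False by simp
qed

lemma K_norm_diff_transl_le:
  assumes windows: "\<And>s. finite (\<Lambda> \<inter> (+) s ` K) \<and> card (\<Lambda> \<inter> (+) s ` K) \<le> N"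
    and close: "\<And>x. cmod (w x - w (x - t)) \<le> \<delta>"
  defines "r \<equiv> \<lambda>x. w x - comb_restrict w \<Lambda> x"
  shows "K_norm K (\<lambda>x. w x - transl t w x) \<le> ennreal (2 * real N * \<delta>) + K_norm K r + K_norm K r"
  unfolding K_norm_def[of K "\<lambda>x. w x - transl t w x"]
proof (rule SUP_least)
  fix s
  define A where "A = (+) s ` K"
  define P where "P = A \<inter> (\<Lambda> \<union> (+) t ` \<Lambda>)"
  have "\<delta> \<ge> 0" using order_trans[OF norm_ge_zero close] .
  have P: "finite P" "card P \<le> 2 * N"
    using card_translate_inter_union_le[OF windows] unfolding P_def A_def by blast+
  have "var_mass (\<lambda>x. w x - transl t w x) A \<le>
      infsum (\<lambda>x. (if x \<in> \<Lambda> \<union> (+) t ` \<Lambda> then ennreal \<delta> else 0)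
        + ennreal (cmod (r x)) + ennreal (cmod (transl t r x))) A"
    unfolding var_mass_def r_def
    by (intro infsum_mono ennreal_summable_on cmod_diff_transl_le close)
  also have "\<dots> = infsum (\<lambda>x. if x \<in> \<Lambda> \<union> (+) t ` \<Lambda> then ennreal \<delta> else 0) A
      + var_mass r A + var_mass (transl t r) A"
    by (simp add: var_mass_def infsum_add ennreal_summable_on)
  also have "infsum (\<lambda>x. if x \<in> \<Lambda> \<union> (+) t ` \<Lambda> then ennreal \<delta> else 0) A = of_nat (card P) * ennreal \<delta>"
  proof -
    have "infsum (\<lambda>x. if x \<in> \<Lambda> \<union> (+) t ` \<Lambda> then ennreal \<delta> else 0) A = infsum (\<lambda>_. ennreal \<delta>) P"
      by (rule infsum_cong_neutral) (auto simp: P_def)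
    then show ?thesis using P(1) by simp
  qed
  also have "\<dots> \<le> ennreal (2 * real N * \<delta>)"
    using P(2) \<open>\<delta> \<ge> 0\<close>
    by (simp add: ennreal_of_nat_eq_real_of_nat ennreal_mult[symmetric] ennreal_leI mult_right_mono)
  also have "var_mass r A \<le> K_norm K r"
    unfolding A_def by (rule var_mass_le_K_norm)
  also have "var_mass (transl t r) A \<le> K_norm K r"
    unfolding A_def K_norm_transl[of K t r, symmetric] by (rule var_mass_le_K_norm)
  finally show "var_mass (\<lambda>x. w x - transl t w x) ((+) s ` K)
      \<le> ennreal (2 * real N * \<delta>) + K_norm K r + K_norm K r"
    by (simp add: A_def add_mono)
qed

lemma norm_ap_imp_sup_ap:
  assumes "K \<noteq> {}" and "norm_ap K w"
  shows "sup_ap w"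
  unfolding sup_ap_def
proof (intro allI impI)
  fix \<epsilon> :: real
  assume "\<epsilon> > 0"
  then have "rel_dense {t. K_norm K (\<lambda>x. w x - transl t w x) < ennreal \<epsilon>}"
    using assms(2) by (simp add: norm_ap_def)
  then show "rel_dense {t. (SUP x. ennreal (cmod (w (t + x) - w x))) < ennreal \<epsilon>}"
    by (rule rel_dense_mono[rotated])
      (auto simp flip: sup_norm_diff_transl intro: le_less_trans sup_norm_le_K_norm[OF assms(1)])
qed

lemma sup_ap_imp_norm_ap:
  fixes K :: "'a::topological_ab_group_add set"
  assumes "compact K" and "concentrated K w" and "sup_ap w"
  shows "norm_ap K w"
  unfolding norm_ap_def
proof (intro allI impI)
  fix \<epsilon> :: real
  assume "\<epsilon> > 0"
  then obtain \<Lambda> where "FLC \<Lambda>"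
    and approx: "K_norm K (\<lambda>x. w x - comb_restrict w \<Lambda> x) < ennreal (\<epsilon> / 3)"
    using assms(2) unfolding concentrated_def by (meson divide_pos_pos zero_less_numeral)
  obtain N where windows: "\<And>s. finite (\<Lambda> \<inter> (+) s ` K) \<and> card (\<Lambda> \<inter> (+) s ` K) \<le> N"
    using FLC_translates_card_bounded[OF \<open>FLC \<Lambda>\<close> assms(1)] by blast
  define \<delta> where "\<delta> = \<epsilon> / (3 * (2 * real N + 1))"
  have "\<delta> > 0" using \<open>\<epsilon> > 0\<close> by (simp add: \<delta>_def)
  have "2 * real N * \<delta> = (\<epsilon> / 3) * (2 * real N / (2 * real N + 1))"
    by (simp add: \<delta>_def field_simps)
  also have "\<dots> < (\<epsilon> / 3) * 1"
    using \<open>\<epsilon> > 0\<close> by (intro mult_strict_left_mono) auto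
  finally have small: "ennreal (2 * real N * \<delta>) < ennreal (\<epsilon> / 3)"
    using \<open>\<epsilon> > 0\<close> by (intro ennreal_lessI) auto
  have "rel_dense {t. sup_norm (\<lambda>x. w x - transl t w x) < ennreal \<delta>}"
    using assms(3) \<open>\<delta> > 0\<close> by (simp add: sup_ap_def sup_norm_diff_transl)
  then show "rel_dense {t. K_norm K (\<lambda>x. w x - transl t w x) < ennreal \<epsilon>}"
  proof (rule rel_dense_mono[rotated], safe)
    fix t
    assume "sup_norm (\<lambda>x. w x - transl t w x) < ennreal \<delta>"
    then have "ennreal (cmod (w x - transl t w x)) < ennreal \<delta>" for x
      unfolding sup_norm_def by (rule le_less_trans[OF SUP_upper, rotated]) simp
    then have "cmod (w x - w (x - t)) \<le> \<delta>" for x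
      by (simp add: transl_def ennreal_less_iff less_imp_le)
    then have "K_norm K (\<lambda>x. w x - transl t w x) < ennreal (\<epsilon> / 3) + ennreal (\<epsilon> / 3) + ennreal (\<epsilon> / 3)"
      using K_norm_diff_transl_le[OF windows] small approx
      by (meson add_strict_mono le_less_trans)
    then show "K_norm K (\<lambda>x. w x - transl t w x) < ennreal \<epsilon>"
      using \<open>\<epsilon> > 0\<close> by (simp flip: ennreal_plus)
  qed
qed

theorem lemma13p6:
  fixes K :: "'a::{topological_ab_group_add, t2_space} set"
    and w :: "'a \<Rightarrow> complex"
  assumes "locally_compact_space (euclidean :: 'a topology)"
    and "sigma_compact_space TYPE('a)"
    and "compact K" and "interior K \<noteq> {}"
    and "weighted_comb w"
    and "concentrated K w"
    and "sup_norm w < \<infinity>"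
  shows "norm_ap K w \<longleftrightarrow> sup_ap w"
proof -
  have "K \<noteq> {}" using assms(4) interior_subset by blast
  then show ?thesis
    using norm_ap_imp_sup_ap sup_ap_imp_norm_ap[OF assms(3,6)] by blast
qed

end
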